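(* Consider the algorithm SR-DFF run with input $m$ on a stream consistent with a representation $\mathcal{G}$ of size $m$ with at most $k$ exceptions. At all times during the run, if $C[\hat x]$ is a valid and non-corrupted rule, then: (i) the conjunction $C[\hat x]$ is satisfied by every example in $G(\hat x)$; and (ii) for every feature $\phi$ in $C[\hat x]$, there is some valid example $x\in\mathcal{X}$ such that $\phi(G(\hat x),G(x))=\phi$.
   Context: Setting. $\mathcal{X}$ is a domain, $\mathcal{Y}$ a finite label set, $\Phi$ a set of binary features on $\mathcal{X}$ closed under negation. A representation of size $m$ is a cover $\mathcal{G}=\{G_1,\dots,G_m\}$ of $\mathcal{X}$ by components with labels $\ell(G)$; each $x$ has a fixed component $G(x)\ni x$; $c^*(x)=\ell(G(x))$; for components $G_i,G_j$ with different labels there is $\phi(G_i,G_j)\in\Phi$ true on all of $G_i$ and false on all of $G_j$, with $\phi(G_j,G_i)=\neg\phi(G_i,G_j)$. Protocol: the learner first gets $x_0$ with label $y_0$; then each example $x_t$ arrives, the learner predicts a label with an explanation example previously seen with that label; on a mistake the teacher gives $y_t=c^*(x_t)$ and $\phi(G(x_t),G(\hat x_t))$, $\hat x_t$ the explanation. An exception is an example on which the feedback is inconsistent with the representation/protocol; a stream is consistent with $\mathcal{G}$ with at most $k$ exceptions if at most $k$ examples are exceptions. Non-exception examples are called valid. SR-DFF (input $m$): receives $(x_0,y_0)$; maintains a list $L$ of rules, each indexed by a representative example $x$, with a conjunction $C[x]$ of features and a label $\texttt{label}[x]$. On $x_t$: if some $C[\hat x]\in L$ is satisfied by $x_t$,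 predict $\texttt{label}[\hat x]$ with explanation $\hat x$; if incorrect, receive $y_t,\phi$, set $C[\hat x]:=C[\hat x]\wedge\neg\phi$, and delete the rule if $C[\hat x]$ has at least $m$ features. Otherwise predict $y_0$ with explanation $x_0$; if incorrect, receive $y_t,\phi$ and add a new rule with empty conjunction $C[x_t]$ and $\texttt{label}[x_t]=y_t$. A rule $C[x]$ is valid if $x$ is a valid example (it is created by an exception if $x$ is an exception). A rule is corrupted if at least one of the features in its conjunction was added during a refinement step triggered by an example $x_t$ that was an exception. *)

theory Defs
  imports Main
begin

(* Features: elements of type 'f, evaluated by ev :: 'f => 'x => bool.
   A conjunction is a list of (feature, time at which it was added). *)

definition sat :: "('f \<Rightarrow> 'x \<Rightarrow> bool) \<Rightarrow> 'x \<Rightarrow> ('f \<times> nat) list \<Rightarrow> bool" where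
  "sat ev x C = (\<forall>p \<in> set C. ev (fst p) x)"

(* A rule is (t, C): representative example xs t (time index t of the example
   that created it), conjunction C; its label is ys t. *)
type_synonym 'f rule = "nat \<times> ('f \<times> nat) list"

(* Explanation used at time t: index of the first rule satisfied by xs t,
   or 0 (the initial example x_0) if none. *)
definition expl :: "('f \<Rightarrow> 'x \<Rightarrow> bool) \<Rightarrow> (nat \<Rightarrow> 'x) \<Rightarrow> nat \<Rightarrow> 'f rule list \<Rightarrow> nat" where
  "expl ev xs t L = (case find (\<lambda>r. sat ev (xs t) (snd r)) L of Some r \<Rightarrow> fst r | None \<Rightarrow> 0)"

(* One step of SR-DFF on example xs t (t >= 1); ys t is the (teacher's) label,
   phis t the feature given by the teacher on a mistake. *)
definition srdff_step ::
  "('f \<Rightarrow> 'x \<Rightarrow> bool) \<Rightarrow> ('f \<Rightarrow> 'f) \<Rightarrow> nat \<Rightarrow> (nat \<Rightarrow> 'x) \<Rightarrow> (nat \<Rightarrow> 'y) \<Rightarrow> (nat \<Rightarrow> 'f)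
   \<Rightarrow> nat \<Rightarrow> 'f rule list \<Rightarrow> 'f rule list" where
  "srdff_step ev neg m xs ys phis t L =
    (case find (\<lambda>r. sat ev (xs t) (snd r)) L of
       Some r \<Rightarrow>
         (if ys (fst r) = ys t then L
          else (let C' = (neg (phis t), t) # snd r in
                if m \<le> card (fst ` set C') then filter (\<lambda>q. fst q \<noteq> fst r) L
                else map (\<lambda>q. if fst q = fst r then (fst r, C') else q) L))
     | None \<Rightarrow> (if ys 0 = ys t then L else L @ [(t, [])]))"

(* srdff_run ... n = the rule list after processing examples x_1..x_n *)
fun srdff_run ::
  "('f \<Rightarrow> 'x \<Rightarrow> bool) \<Rightarrow> ('f \<Rightarrow> 'f) \<Rightarrow> nat \<Rightarrow> (nat \<Rightarrow> 'x) \<Rightarrow> (nat \<Rightarrow> 'y) \<Rightarrow> (nat \<Rightarrow> 'f)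
   \<Rightarrow> nat \<Rightarrow> 'f rule list" where
  "srdff_run ev neg m xs ys phis 0 = []"
| "srdff_run ev neg m xs ys phis (Suc n) =
     srdff_step ev neg m xs ys phis (Suc n) (srdff_run ev neg m xs ys phis n)"

(* Example t is an exception: the feedback is inconsistent with the representation
   (component map Gc, labels lab, separating features sep). *)
definition is_exc ::
  "('x \<Rightarrow> 'g) \<Rightarrow> ('g \<Rightarrow> 'y) \<Rightarrow> ('g \<Rightarrow> 'g \<Rightarrow> 'f) \<Rightarrow>
   ('f \<Rightarrow> 'x \<Rightarrow> bool) \<Rightarrow> ('f \<Rightarrow> 'f) \<Rightarrow> nat \<Rightarrow> (nat \<Rightarrow> 'x) \<Rightarrow> (nat \<Rightarrow> 'y) \<Rightarrow> (nat \<Rightarrow> 'f)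
   \<Rightarrow> nat \<Rightarrow> bool" where
  "is_exc Gc lab sep ev neg m xs ys phis t =
    (if t = 0 then ys 0 \<noteq> lab (Gc (xs 0))
     else (let e = expl ev xs t (srdff_run ev neg m xs ys phis (t - 1)) in
           ys t \<noteq> lab (Gc (xs t)) \<or>
           (ys e \<noteq> ys t \<and>
             \<not> (lab (Gc (xs t)) \<noteq> lab (Gc (xs e)) \<and> phis t = sep (Gc (xs t)) (Gc (xs e))))))"

end

theory Submission
  imports Defs
begin

(* A rule starts with the empty conjunction, and a refinement of a
   rule with representative x at a valid mistake on x_t adds neg phi, where the teacher's
   feature is phi = phi(G(x_t), G(x)); by the representation neg phi = phi(G(x), G(x_t)),
   which holds on all of G(x) and is witnessed by the valid example x_t. Neither the bound
   on the number of exceptions nor the deletion threshold m plays a role. *)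

definition clean_rule :: "(nat \<Rightarrow> bool) \<Rightarrow> 'f rule \<Rightarrow> bool" where
  "clean_rule E r \<longleftrightarrow> \<not> E (fst r) \<and> (\<forall>p\<in>set (snd r). \<not> E (snd p))"

definition rule_sound ::
  "('f \<Rightarrow> 'x \<Rightarrow> bool) \<Rightarrow> ('g \<Rightarrow> 'x set) \<Rightarrow> ('x \<Rightarrow> 'g) \<Rightarrow> ('g \<Rightarrow> 'g \<Rightarrow> 'f) \<Rightarrow> (nat \<Rightarrow> 'x)
   \<Rightarrow> (nat \<Rightarrow> bool) \<Rightarrow> 'f rule \<Rightarrow> bool" where
  "rule_sound ev mem Gc sep xs E r \<longleftrightarrow>
     (\<forall>x\<in>mem (Gc (xs (fst r))). sat ev x (snd r))
     \<and> (\<forall>p\<in>set (snd r). \<exists>s. \<not> E s \<and> sep (Gc (xs (fst r))) (Gc (xs s)) = fst p)"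

lemma rule_sound_Nil: "rule_sound ev mem Gc sep xs E (e, [])"
  by (simp add: rule_sound_def sat_def)

lemma rule_sound_Cons:
  assumes "rule_sound ev mem Gc sep xs E (e, C)"
    and "\<forall>x\<in>mem (Gc (xs e)). ev f x"
    and "\<not> E s" and "sep (Gc (xs e)) (Gc (xs s)) = f"
  shows "rule_sound ev mem Gc sep xs E (e, (f, t) # C)"
  using assms by (auto simp: rule_sound_def sat_def)

lemma sep_swap_neg:
  assumes neg: "\<forall>f x. ev (neg f) x = (\<not> ev f x)"
    and sep: "\<forall>i\<in>Gs. \<forall>j\<in>Gs. lab i \<noteq> lab j \<longrightarrow>
                (\<forall>x\<in>mem i. ev (sep i j) x) \<and> (\<forall>x\<in>mem j. \<not> ev (sep i j) x)
                \<and> sep j i = neg (sep i j)"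
    and "i \<in> Gs" "j \<in> Gs" "lab i \<noteq> lab j"
  shows "sep j i = neg (sep i j)" and "\<forall>x\<in>mem j. ev (neg (sep i j)) x"
proof -
  have "(\<forall>x\<in>mem j. \<not> ev (sep i j) x) \<and> sep j i = neg (sep i j)"
    using sep assms(3-5) by blast
  then show "sep j i = neg (sep i j)" and "\<forall>x\<in>mem j. ev (neg (sep i j)) x"
    using neg by simp_all
qed

lemma srdff_step_cases:
  assumes "q \<in> set (srdff_step ev neg m xs ys phis t L)"
  obtains "q \<in> set L"
  | "q = (t, [])"
  | r where "find (\<lambda>r. sat ev (xs t) (snd r)) L = Some r" and "ys (fst r) \<noteq> ys t"
      and "q = (fst r, (neg (phis t), t) # snd r)"
  using assms
  by (auto simp: srdff_step_def Let_def split: option.splits if_splits)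

lemma valid_mistake_feedback:
  assumes "\<not> is_exc Gc lab sep ev neg m xs ys phis (Suc n)"
    and "find (\<lambda>r. sat ev (xs (Suc n)) (snd r)) (srdff_run ev neg m xs ys phis n) = Some r"
    and "ys (fst r) \<noteq> ys (Suc n)"
  shows "lab (Gc (xs (Suc n))) \<noteq> lab (Gc (xs (fst r)))"
    and "phis (Suc n) = sep (Gc (xs (Suc n))) (Gc (xs (fst r)))"
  using assms by (auto simp: is_exc_def expl_def Let_def)

lemma srdff_run_clean_rule_sound:
  fixes m :: nat and xs :: "nat \<Rightarrow> 'x" and ys :: "nat \<Rightarrow> 'y" and phis :: "nat \<Rightarrow> 'f"
  assumes neg: "\<forall>f x. ev (neg f) x = (\<not> ev f x)"
    and comp: "\<forall>x. Gc x \<in> Gs \<and> x \<in> mem (Gc x)"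
    and sep: "\<forall>i\<in>Gs. \<forall>j\<in>Gs. lab i \<noteq> lab j \<longrightarrow>
                (\<forall>x\<in>mem i. ev (sep i j) x) \<and> (\<forall>x\<in>mem j. \<not> ev (sep i j) x)
                \<and> sep j i = neg (sep i j)"
  defines "E \<equiv> is_exc Gc lab sep ev neg m xs ys phis"
  shows "q \<in> set (srdff_run ev neg m xs ys phis n) \<Longrightarrow> clean_rule E q
           \<Longrightarrow> rule_sound ev mem Gc sep xs E q"
proof (induction n arbitrary: q)
  case 0
  then show ?case by simp
next
  case (Suc n)
  from Suc.prems(1)
  have "q \<in> set (srdff_step ev neg m xs ys phis (Suc n) (srdff_run ev neg m xs ys phis n))"
    by simp
  then show ?case
  proof (cases rule: srdff_step_cases)
    case 1
    then show ?thesis using Suc by simp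
  next
    case 2
    then show ?thesis by (simp add: rule_sound_Nil)
  next
    case (3 r)
    let ?i = "Gc (xs (Suc n))" and ?j = "Gc (xs (fst r))"
    have r_run: "r \<in> set (srdff_run ev neg m xs ys phis n)"
      using 3(1) by (auto simp: find_Some_iff)
    have valid_t: "\<not> E (Suc n)" and "clean_rule E r"
      using Suc.prems(2) 3(3) by (auto simp: clean_rule_def)
    then have sound_r: "rule_sound ev mem Gc sep xs E (fst r, snd r)"
      using Suc.IH r_run by simp
    note feedback = valid_mistake_feedback[OF valid_t[unfolded E_def] 3(1,2)]
    have "?i \<in> Gs" "?j \<in> Gs"
      using comp by auto
    note swapped = sep_swap_neg[OF neg sep this feedback(1), folded feedback(2)]
    show ?thesis
      unfolding 3(3) by (rule rule_sound_Cons[OF sound_r swapped(2) valid_t swapped(1)])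
  qed
qed

theorem lemma1:
  fixes ev :: "'f \<Rightarrow> 'x \<Rightarrow> bool" and neg :: "'f \<Rightarrow> 'f"
    and Gs :: "'g set" and mem :: "'g \<Rightarrow> 'x set" and Gc :: "'x \<Rightarrow> 'g"
    and lab :: "'g \<Rightarrow> 'y::finite" and sep :: "'g \<Rightarrow> 'g \<Rightarrow> 'f"
    and m k :: nat and xs :: "nat \<Rightarrow> 'x" and ys :: "nat \<Rightarrow> 'y" and phis :: "nat \<Rightarrow> 'f"
  assumes neg: "\<forall>f x. ev (neg f) x = (\<not> ev f x)"
    and fin: "finite Gs" and size: "card Gs = m"
    and comp: "\<forall>x. Gc x \<in> Gs \<and> x \<in> mem (Gc x)"
    and sep: "\<forall>i\<in>Gs. \<forall>j\<in>Gs. lab i \<noteq> lab j \<longrightarrow>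
                (\<forall>x\<in>mem i. ev (sep i j) x) \<and> (\<forall>x\<in>mem j. \<not> ev (sep i j) x)
                \<and> sep j i = neg (sep i j)"
    and exc: "finite {t. is_exc Gc lab sep ev neg m xs ys phis t}
              \<and> card {t. is_exc Gc lab sep ev neg m xs ys phis t} \<le> k"
  shows "\<forall>n r. r \<in> set (srdff_run ev neg m xs ys phis n)
           \<and> \<not> is_exc Gc lab sep ev neg m xs ys phis (fst r)
           \<and> (\<forall>p\<in>set (snd r). \<not> is_exc Gc lab sep ev neg m xs ys phis (snd p))
           \<longrightarrow> (\<forall>x\<in>mem (Gc (xs (fst r))). sat ev x (snd r))
             \<and> (\<forall>p\<in>set (snd r). \<exists>s. \<not> is_exc Gc lab sep ev neg m xs ys phis s
                   \<and> sep (Gc (xs (fst r))) (Gc (xs s)) = fst p)"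
  using srdff_run_clean_rule_sound[OF neg comp sep]
  unfolding clean_rule_def rule_sound_def by blast

end
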